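(* Consider the constant-altitude cruise minimum-fuel optimal control problem $$\min_{v(\cdot)\in[v_{\min},v_{\max}],\ \chi(\cdot),\ t_f}\ \mathcal J:=-m(t_f)$$ subject to $$\frac{dx}{dt}=v\cos\chi+W_x(x,y)=:F_x,\quad \frac{dy}{dt}=v\sin\chi+W_y(x,y)=:F_y,\quad \frac{dm}{dt}=-D(m,v)\,C_s(v)=:F_m,$$ with $x(0),y(0),m(0)$ and $x(t_f),y(t_f)$ prescribed and $t_f$ free, where $W_x,W_y$ are wind components, $D>0$ is the drag and $C_s>0$ the specific fuel consumption. Let $\mathcal H=\lambda_xF_x+\lambda_yF_y+\lambda_mF_m$ be the Hamiltonian, with costates satisfying $\frac{d\lambda}{dt}=-\frac{\partial\mathcal H}{\partial X}$ ($X=(x,y,m)$), $\lambda_m(t_f)=-1$, $\mathcal H(t)\equiv 0$ on $[0,t_f]$, and the heading satisfying $\tan\chi(t)=\lambda_y/\lambda_x$. Assume: (i) $C_s(v)>0$ is non-decreasing in $v$ and $D(m,v)>0$ is non-decreasing in both $v$ and $m$; (ii) $F_{m,vv}:=\frac{\partial^2F_m}{\partial v^2}<0$; (iii) for each $t\in[0,t_f]$ the first-order condition $\frac{\partial\mathcal H}{\partial v}(t)=0$ can be written as $G(m(t),v^*(t),W_x,W_y,\bar h)=0$ ($\bar h$ the cruise altitude), this equation implicitly defines a unique mapping $v^*(t)=f(m(t),W_x,W_y,\bar h)$, and the resulting control satisfies $v_{\min}<v^*(t)<v_{\max}$ for all $t\in[0,t_f]$. Then the minimizer $v^*(t)$ of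 the Hamiltonian satisfies $v_{\min}<v^*(t)<v_{\max}$ for all $t\in[0,t_f]$, and the Hamiltonian is strictly convex in $v$ at $v^*(t)$: $\frac{\partial^2\mathcal H}{\partial v^2}(t)>0$ at every $t$ where $\frac{\partial\mathcal H}{\partial v}(t)=0$, so the stationary point is a local minimum of $\mathcal H$ in $v$.
   Context: Point-mass cruise at constant altitude $\bar h$ with airspeed $v$ treated as a control (quasi-steady flight, thrust equal to drag) and heading angle $\chi$ as a second control. *)

theory Defs
  imports "HOL-Analysis.Analysis"
begin

definition Fm :: "(real \<Rightarrow> real \<Rightarrow> real) \<Rightarrow> (real \<Rightarrow> real) \<Rightarrow> real \<Rightarrow> real \<Rightarrow> real" where
  "Fm D Cs m v = - (D m v * Cs v)"

definition Ham ::
  "(real \<Rightarrow> real \<Rightarrow> real) \<Rightarrow> (real \<Rightarrow> real \<Rightarrow> real) \<Rightarrow> (real \<Rightarrow> real \<Rightarrow> real) \<Rightarrow> (real \<Rightarrow> real)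
   \<Rightarrow> real \<Rightarrow> real \<Rightarrow> real \<Rightarrow> real \<Rightarrow> real \<Rightarrow> real \<Rightarrow> real \<Rightarrow> real \<Rightarrow> real" where
  "Ham Wx Wy D Cs lx ly lm x y m v chi =
     lx * (v * cos chi + Wx x y) + ly * (v * sin chi + Wy x y) + lm * Fm D Cs m v"

end

theory Submission
  imports Defs
begin

text \<open>The mass costate obeys the linear equation \<open>\<lambda>\<^sub>m' = \<lambda>\<^sub>m D\<^sub>m C\<^sub>s\<close>, so it
  never changes sign, and the transversality condition \<open>\<lambda>\<^sub>m(t\<^sub>f) = -1\<close> makes it
  negative throughout.  Only \<open>\<lambda>\<^sub>m F\<^sub>m\<close> in the Hamiltonian is nonlinear in \<open>v\<close>,
  hence \<open>\<partial>\<^sup>2H/\<partial>v\<^sup>2 = \<lambda>\<^sub>m \<partial>\<^sup>2F\<^sub>m/\<partial>v\<^sup>2\<close>, a product of two negative numbers.\<close>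

lemma linear_ode_integrating_factor_constant:
  fixes u c :: "real \<Rightarrow> real"
  assumes c_cont: "continuous_on {a..b} c"
    and u_ode: "\<And>t. t \<in> {a..b} \<Longrightarrow> (u has_real_derivative u t * c t) (at t within {a..b})"
    and s: "s \<in> {a..b}" and t: "t \<in> {a..b}"
  shows "u t * exp (- integral {a..t} c) = u s * exp (- integral {a..s} c)"
proof -
  define E where "E r = exp (- integral {a..r} c)" for r
  have E_deriv: "(E has_real_derivative E r * (- c r)) (at r within {a..b})"
    if "r \<in> {a..b}" for r
    unfolding E_def
    using DERIV_chain'[OF DERIV_minus[OF integral_has_real_derivative[OF c_cont that]] DERIV_exp] .
  have "((\<lambda>r. u r * E r) has_real_derivative 0) (at r within {a..b})" if "r \<in> {a..b}" for r
    using DERIV_mult[OF u_ode[OF that] E_deriv[OF that]] by (simp add: algebra_simps)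
  then obtain k where "\<And>r. r \<in> {a..b} \<Longrightarrow> u r * E r = k"
    using has_field_derivative_zero_constant[of "{a..b}" "\<lambda>r. u r * E r"] by auto
  then show ?thesis
    using s t unfolding E_def by metis
qed

lemma linear_ode_negative:
  fixes u c :: "real \<Rightarrow> real"
  assumes "continuous_on {a..b} c"
    and "\<And>t. t \<in> {a..b} \<Longrightarrow> (u has_real_derivative u t * c t) (at t within {a..b})"
    and "s \<in> {a..b}" and "u s < 0" and "t \<in> {a..b}"
  shows "u t < 0"
proof -
  have "u t * exp (- integral {a..t} c) < 0"
    using linear_ode_integrating_factor_constant[OF assms(1,2,3,5)] \<open>u s < 0\<close>
    by (simp add: mult_neg_pos)
  then show ?thesis
    by (simp add: mult_less_0_iff)
qed

lemma Ham_has_derivative_speed: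
  assumes "((\<lambda>w. Fm D Cs m w) has_real_derivative Fm') (at v)"
  shows "((\<lambda>w. Ham Wx Wy D Cs lx ly lm x y m w chi) has_real_derivative
           lx * cos chi + ly * sin chi + lm * Fm') (at v)"
proof -
  have "((\<lambda>w. Ham Wx Wy D Cs lx ly lm x y m w chi) has_real_derivative
           lx * (1 * cos chi + 0) + ly * (1 * sin chi + 0) + lm * Fm') (at v)"
    unfolding Ham_def
    by (intro DERIV_add DERIV_cmult DERIV_cmult_right DERIV_ident DERIV_const assms)
  then show ?thesis
    by simp
qed

lemma Ham_second_deriv_speed:
  assumes Fm_v: "\<And>w. ((\<lambda>w'. Fm D Cs m w') has_real_derivative Fmv w) (at w)"
    and Fmv_v: "(Fmv has_real_derivative Fmvv) (at v)"
  shows "deriv (deriv (\<lambda>w. Ham Wx Wy D Cs lx ly lm x y m w chi)) v = lm * Fmvv"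
proof -
  have "deriv (\<lambda>w. Ham Wx Wy D Cs lx ly lm x y m w chi) =
          (\<lambda>w. lx * cos chi + ly * sin chi + lm * Fmv w)"
    using Ham_has_derivative_speed[OF Fm_v] DERIV_imp_deriv by blast
  moreover have "((\<lambda>w. lx * cos chi + ly * sin chi + lm * Fmv w) has_real_derivative lm * Fmvv) (at v)"
    using DERIV_add[OF DERIV_const DERIV_cmult[OF Fmv_v]] by simp
  ultimately show ?thesis
    using DERIV_imp_deriv by simp
qed

theorem theorem2:
  fixes Wx Wy :: "real \<Rightarrow> real \<Rightarrow> real"
    and Wxx Wxy Wyx Wyy :: "real \<Rightarrow> real \<Rightarrow> real"
    and D Dm Fmv Fmvv :: "real \<Rightarrow> real \<Rightarrow> real"
    and Cs :: "real \<Rightarrow> real"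
    and x y m lx ly lm v chi :: "real \<Rightarrow> real"
    and tf vmin vmax hbar x0 y0 m0 xf yf :: real
    and G :: "real \<Rightarrow> real \<Rightarrow> real \<Rightarrow> real \<Rightarrow> real \<Rightarrow> real"
    and f :: "real \<Rightarrow> real \<Rightarrow> real \<Rightarrow> real \<Rightarrow> real"
  assumes tf_pos: "0 < tf"
    \<comment> \<open>partial derivatives of the wind field\<close>
    and Wx_x: "\<And>a b. ((\<lambda>a'. Wx a' b) has_real_derivative Wxx a b) (at a)"
    and Wx_y: "\<And>a b. ((\<lambda>b'. Wx a b') has_real_derivative Wxy a b) (at b)"
    and Wy_x: "\<And>a b. ((\<lambda>a'. Wy a' b) has_real_derivative Wyx a b) (at a)"
    and Wy_y: "\<And>a b. ((\<lambda>b'. Wy a b') has_real_derivative Wyy a b) (at b)"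
    \<comment> \<open>partial derivative of the drag w.r.t. the mass (continuous)\<close>
    and D_m: "\<And>mm w. ((\<lambda>q. D q w) has_real_derivative Dm mm w) (at mm)"
    and Dm_cont: "continuous_on UNIV (\<lambda>p. Dm (fst p) (snd p))"
    and Cs_cont: "continuous_on UNIV Cs"
    \<comment> \<open>first and second partial derivatives of F_m w.r.t. v\<close>
    and Fm_v: "\<And>mm w. ((\<lambda>w'. Fm D Cs mm w') has_real_derivative Fmv mm w) (at w)"
    and Fmv_v: "\<And>mm w. ((\<lambda>w'. Fmv mm w') has_real_derivative Fmvv mm w) (at w)"
    \<comment> \<open>(i)\<close>
    and Cs_pos: "\<And>w. Cs w > 0"
    and Cs_mono: "\<And>w1 w2. w1 \<le> w2 \<Longrightarrow> Cs w1 \<le> Cs w2"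
    and D_pos: "\<And>mm w. D mm w > 0"
    and D_mono_v: "\<And>mm w1 w2. w1 \<le> w2 \<Longrightarrow> D mm w1 \<le> D mm w2"
    and D_mono_m: "\<And>m1 m2 w. m1 \<le> m2 \<Longrightarrow> D m1 w \<le> D m2 w"
    \<comment> \<open>(ii)\<close>
    and Fmvv_neg: "\<And>mm w. Fmvv mm w < 0"
    \<comment> \<open>dynamics on [0,tf]\<close>
    and v_cont: "continuous_on {0..tf} v"
    and x_ode: "\<And>t. t \<in> {0..tf} \<Longrightarrow>
       (x has_real_derivative (v t * cos (chi t) + Wx (x t) (y t))) (at t within {0..tf})"
    and y_ode: "\<And>t. t \<in> {0..tf} \<Longrightarrow>
       (y has_real_derivative (v t * sin (chi t) + Wy (x t) (y t))) (at t within {0..tf})"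
    and m_ode: "\<And>t. t \<in> {0..tf} \<Longrightarrow>
       (m has_real_derivative Fm D Cs (m t) (v t)) (at t within {0..tf})"
    and bc: "x 0 = x0" "y 0 = y0" "m 0 = m0" "x tf = xf" "y tf = yf"
    \<comment> \<open>costate equations  d lambda/dt = - dH/dX\<close>
    and lx_ode: "\<And>t. t \<in> {0..tf} \<Longrightarrow>
       (lx has_real_derivative
          - (lx t * Wxx (x t) (y t) + ly t * Wyx (x t) (y t))) (at t within {0..tf})"
    and ly_ode: "\<And>t. t \<in> {0..tf} \<Longrightarrow>
       (ly has_real_derivative
          - (lx t * Wxy (x t) (y t) + ly t * Wyy (x t) (y t))) (at t within {0..tf})"
    and lm_ode: "\<And>t. t \<in> {0..tf} \<Longrightarrow>
       (lm has_real_derivative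
          - (lm t * (- (Dm (m t) (v t) * Cs (v t))))) (at t within {0..tf})"
    and lm_tf: "lm tf = -1"
    and H_zero: "\<And>t. t \<in> {0..tf} \<Longrightarrow>
       Ham Wx Wy D Cs (lx t) (ly t) (lm t) (x t) (y t) (m t) (v t) (chi t) = 0"
    and heading: "\<And>t. t \<in> {0..tf} \<Longrightarrow> tan (chi t) = ly t / lx t"
    \<comment> \<open>(iii)\<close>
    and G_repr: "\<And>t w. t \<in> {0..tf} \<Longrightarrow>
       (deriv (\<lambda>w'. Ham Wx Wy D Cs (lx t) (ly t) (lm t) (x t) (y t) (m t) w' (chi t)) w = 0
        \<longleftrightarrow> G (m t) w (Wx (x t) (y t)) (Wy (x t) (y t)) hbar = 0)"
    and f_sol: "\<And>mm wx wy. G mm (f mm wx wy hbar) wx wy hbar = 0"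
    and f_unique: "\<And>mm w wx wy. G mm w wx wy hbar = 0 \<Longrightarrow> w = f mm wx wy hbar"
    and v_eq_f: "\<And>t. t \<in> {0..tf} \<Longrightarrow> v t = f (m t) (Wx (x t) (y t)) (Wy (x t) (y t)) hbar"
    and v_bounds: "\<And>t. t \<in> {0..tf} \<Longrightarrow> vmin < v t \<and> v t < vmax"
  shows "\<forall>t \<in> {0..tf}. vmin < v t \<and> v t < vmax \<and>
     (deriv (\<lambda>w. Ham Wx Wy D Cs (lx t) (ly t) (lm t) (x t) (y t) (m t) w (chi t)) (v t) = 0
      \<longrightarrow> deriv (deriv (\<lambda>w. Ham Wx Wy D Cs (lx t) (ly t) (lm t) (x t) (y t) (m t) w (chi t))) (v t) > 0)"
proof -
  have m_cont: "continuous_on {0..tf} m"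
    using m_ode by (meson DERIV_continuous continuous_on_eq_continuous_within)
  have Dm_Cs_cont: "continuous_on {0..tf} (\<lambda>t. Dm (m t) (v t) * Cs (v t))"
  proof (rule continuous_on_mult)
    show "continuous_on {0..tf} (\<lambda>t. Dm (m t) (v t))"
      using continuous_on_compose2[OF Dm_cont continuous_on_Pair[OF m_cont v_cont]] by simp
    show "continuous_on {0..tf} (\<lambda>t. Cs (v t))"
      using continuous_on_compose2[OF Cs_cont v_cont] by simp
  qed
  have lm_neg: "lm t < 0" if "t \<in> {0..tf}" for t
  proof (rule linear_ode_negative[OF Dm_Cs_cont _ _ _ that])
    show "tf \<in> {0..tf}" "lm tf < 0"
      using tf_pos lm_tf by auto
    show "(lm has_real_derivative lm s * (Dm (m s) (v s) * Cs (v s))) (at s within {0..tf})"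
      if "s \<in> {0..tf}" for s
      using lm_ode[OF that] by simp
  qed
  show ?thesis
  proof
    fix t assume t: "t \<in> {0..tf}"
    have "deriv (deriv (\<lambda>w. Ham Wx Wy D Cs (lx t) (ly t) (lm t) (x t) (y t) (m t) w (chi t))) (v t)
            = lm t * Fmvv (m t) (v t)"
      by (rule Ham_second_deriv_speed[OF Fm_v Fmv_v])
    moreover have "lm t * Fmvv (m t) (v t) > 0"
      using lm_neg[OF t] Fmvv_neg by (simp add: mult_neg_neg)
    ultimately show "vmin < v t \<and> v t < vmax \<and>
        (deriv (\<lambda>w. Ham Wx Wy D Cs (lx t) (ly t) (lm t) (x t) (y t) (m t) w (chi t)) (v t) = 0
         \<longrightarrow> deriv (deriv (\<lambda>w. Ham Wx Wy D Cs (lx t) (ly t) (lm t) (x t) (y t) (m t) w (chi t))) (v t) > 0)"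
      using v_bounds[OF t] by simp
  qed
qed

end
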